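(* Let $\mathcal{F}$, $B_1,\dots,B_m$ be as in the context. Let $\mathcal{G}\subseteq\mathcal{F}$ and let $\phi:\mathcal{G}\to 2^{[n]}$ satisfy $\phi(G)\subseteq G$ for all $G\in\mathcal{G}$. Suppose $\mathcal{G}=\mathcal{G}_1\sqcup\mathcal{G}_2$ where every $F_k\in\mathcal{G}_1$ satisfies $|B_k|=d$ and $\phi(F_k)=B_k$. If the restriction $\phi|_{\mathcal{G}_2}$ is injective, then $\phi$ is injective.
   Context: Let $\mathcal{F}=\{F_1,\dots,F_m\}\subseteq\binom{[n]}{d+1}$ consist of distinct sets and have VC-dimension at most $d$ (no $(d+1)$-set $S$ is shattered, i.e. no $S$ such that every $A\subseteq S$ equals $F\cap S$ for some $F\in\mathcal{F}$). For $i\in[m]$, call $B\subsetneq F_i$ admissible for $F_i$ if $F\cap F_i\neq B$ for every $F\in\mathcal{F}$ (admissible sets exist by the VC-dimension assumption). For each $i$, $B_i$ is a fixed admissible set for $F_i$ of maximum cardinality among all admissible sets for $F_i$. *)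

theory Defs
  imports Main
begin

definition shatters :: "'a set set \<Rightarrow> 'a set \<Rightarrow> bool" where
  "shatters \<F> S \<longleftrightarrow> (\<forall>A. A \<subseteq> S \<longrightarrow> (\<exists>F\<in>\<F>. F \<inter> S = A))"

definition vc_dim_le :: "'a set \<Rightarrow> 'a set set \<Rightarrow> nat \<Rightarrow> bool" where
  "vc_dim_le X \<F> d \<longleftrightarrow> (\<forall>S. S \<subseteq> X \<longrightarrow> card S = d + 1 \<longrightarrow> \<not> shatters \<F> S)"

definition admissible :: "'a set set \<Rightarrow> 'a set \<Rightarrow> 'a set \<Rightarrow> bool" where
  "admissible \<F> Fi B \<longleftrightarrow> B \<subset> Fi \<and> (\<forall>F\<in>\<F>. F \<inter> Fi \<noteq> B)"

end

theory Submission
  imports Defs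
begin

text \<open>If \<open>B\<close> is admissible for \<open>F\<close> and \<open>|B| = |F| - 1\<close>, then any member \<open>F'\<close> of the family
  containing \<open>B\<close> has \<open>B \<subset> F' \<inter> F \<subseteq> F\<close>, which forces \<open>F \<subseteq> F'\<close>; so \<open>B\<close> recovers \<open>F\<close> among
  the equal-size members. An injection on \<open>\<G>\<^sub>2\<close> therefore extends to one on \<open>\<G>\<close>, because
  \<open>\<phi>(G) \<subseteq> G\<close> makes any collision with \<open>\<phi>(F\<^sub>k) = B\<^sub>k\<close> a member containing \<open>B\<^sub>k\<close>.\<close>

lemma admissible_subset_member_imp_subset:
  assumes "admissible \<F> F B" and "F' \<in> \<F>" and "B \<subseteq> F'"
    and "finite F" and "card F = card B + 1"
  shows "F \<subseteq> F'"
proof -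
  have "B \<subset> F' \<inter> F"
    using assms(1-3) unfolding admissible_def by auto
  then have "card F \<le> card (F' \<inter> F)"
    using psubset_card_mono[of "F' \<inter> F" B] \<open>finite F\<close> \<open>card F = card B + 1\<close> by simp
  then have "F' \<inter> F = F"
    using card_seteq[of F "F' \<inter> F"] \<open>finite F\<close> by blast
  then show ?thesis by blast
qed

lemma admissible_subset_member_imp_eq:
  assumes "admissible \<F> F B" and "F' \<in> \<F>" and "B \<subseteq> F'"
    and "finite F'" and "card F' = card F" and "card F = card B + 1"
  shows "F = F'"
proof -
  have "finite F"
    using \<open>card F = card B + 1\<close> by (intro card_ge_0_finite) simp
  have "F \<subseteq> F'"
    using assms(1-3) \<open>finite F\<close> assms(6) by (rule admissible_subset_member_imp_subset)
  with \<open>finite F'\<close> \<open>card F' = card F\<close> show ?thesis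
    using card_subset_eq by metis
qed

lemma inj_on_Un_if_image_determines:
  assumes "inj_on \<phi> \<G>\<^sub>2"
    and "\<And>G. G \<in> \<G>\<^sub>1 \<union> \<G>\<^sub>2 \<Longrightarrow> \<phi> G \<subseteq> G"
    and "\<And>G G'. G \<in> \<G>\<^sub>1 \<Longrightarrow> G' \<in> \<G>\<^sub>1 \<union> \<G>\<^sub>2 \<Longrightarrow> \<phi> G \<subseteq> G' \<Longrightarrow> G = G'"
  shows "inj_on \<phi> (\<G>\<^sub>1 \<union> \<G>\<^sub>2)"
proof (rule inj_onI)
  fix G G' assume G: "G \<in> \<G>\<^sub>1 \<union> \<G>\<^sub>2" and G': "G' \<in> \<G>\<^sub>1 \<union> \<G>\<^sub>2" and eq: "\<phi> G = \<phi> G'"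
  consider "G \<in> \<G>\<^sub>1" | "G' \<in> \<G>\<^sub>1" | "G \<in> \<G>\<^sub>2" "G' \<in> \<G>\<^sub>2"
    using G G' by blast
  then show "G = G'"
  proof cases
    case 1
    moreover have "\<phi> G \<subseteq> G'"
      using assms(2)[OF G'] eq by simp
    ultimately show ?thesis
      using assms(3) G' by blast
  next
    case 2
    moreover have "\<phi> G' \<subseteq> G"
      using assms(2)[OF G] eq by simp
    ultimately show ?thesis
      using assms(3) G by (simp add: eq_commute)
  next
    case 3
    then show ?thesis using assms(1) eq by (auto dest: inj_onD)
  qed
qed

theorem claim3p1:
  fixes n d m :: nat
    and F :: "nat \<Rightarrow> nat set"
    and B :: "nat \<Rightarrow> nat set"
    and \<G> \<G>1 \<G>2 :: "nat set set"
    and \<phi> :: "nat set \<Rightarrow> nat set"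
  assumes F_distinct: "inj_on F {1..m}"
    and F_sub: "\<And>i. i \<in> {1..m} \<Longrightarrow> F i \<subseteq> {1..n}"
    and F_card: "\<And>i. i \<in> {1..m} \<Longrightarrow> card (F i) = d + 1"
    and vc: "vc_dim_le {1..n} (F ` {1..m}) d"
    and B_adm: "\<And>i. i \<in> {1..m} \<Longrightarrow> admissible (F ` {1..m}) (F i) (B i)"
    and B_max: "\<And>i B'. i \<in> {1..m} \<Longrightarrow> admissible (F ` {1..m}) (F i) B' \<Longrightarrow> card B' \<le> card (B i)"
    and G_sub: "\<G> \<subseteq> F ` {1..m}"
    and phi_sub: "\<And>G. G \<in> \<G> \<Longrightarrow> \<phi> G \<subseteq> G"
    and G_union: "\<G> = \<G>1 \<union> \<G>2"
    and G_disj: "\<G>1 \<inter> \<G>2 = {}"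
    and G1_prop: "\<And>k. k \<in> {1..m} \<Longrightarrow> F k \<in> \<G>1 \<Longrightarrow> card (B k) = d \<and> \<phi> (F k) = B k"
    and inj2: "inj_on \<phi> \<G>2"
  shows "inj_on \<phi> \<G>"
proof -
  have "G = G'" if G: "G \<in> \<G>1" and G': "G' \<in> \<G>" and sub: "\<phi> G \<subseteq> G'" for G G'
  proof -
    obtain k l where k: "k \<in> {1..m}" "G = F k" and l: "l \<in> {1..m}" "G' = F l"
      using G G' G_sub G_union by blast
    have "card (B k) = d" "\<phi> (F k) = B k"
      using G1_prop[OF k(1)] G k(2) by auto
    have "finite (F l)"
      using F_card[OF l(1)] by (intro card_ge_0_finite) simp
    have "F k = F l"
    proof (rule admissible_subset_member_imp_eq[OF B_adm[OF k(1)]])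
      show "F l \<in> F ` {1..m}" using l(1) by simp
      show "B k \<subseteq> F l" using sub k(2) l(2) \<open>\<phi> (F k) = B k\<close> by simp
      show "finite (F l)" by fact
      show "card (F l) = card (F k)" using F_card k(1) l(1) by simp
      show "card (F k) = card (B k) + 1" using F_card[OF k(1)] \<open>card (B k) = d\<close> by simp
    qed
    then show ?thesis using k(2) l(2) by simp
  qed
  then show ?thesis
    using inj_on_Un_if_image_determines[OF inj2, of \<G>1] phi_sub
    unfolding G_union by blast
qed

end
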